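(* Let $X$ be a normed space and let $Y$ be a real vector space ordered by a convex pointed cone $K$. Let $\alpha:\mathbb{R}_+\to\mathbb{R}_+$ be nondecreasing with $\lim_{t\to0^+}\alpha(t)/t=0$. Let $A\subset X$ be convex, $k_0\in K\setminus\{0\}$, and let $F:X\to Y$ be strongly $\alpha(\cdot)$-$k_0$ paraconvex on $A$ with constant $C\ge0$. Let $x_0\in A$, $h\in X$ with $\|h\|=1$, and $t_0\in\mathbb{R}$. For $t>t_0$ with $x_0+t_0h,\,x_0+th\in A$ define $$\phi(t):=\frac{F(x_0+th)-F(x_0+t_0h)}{t-t_0}+C\,\frac{\alpha(t-t_0)}{t-t_0}\,k_0.$$ Then for all $t_0<t_1<t$ with $x_0+t_0h,\,x_0+th\in A$ we have $$\phi(t)-\phi(t_1)+C\,\frac{\alpha(t_1-t_0)}{t_1-t_0}\,k_0\in K.$$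
   Context: A cone $K$ is pointed if $K\cap(-K)=\{0\}$. For a convex cone $K\subset Y$, write $x\le_K y$ iff $y-x\in K$. A mapping $F:X\to Y$ is strongly $\alpha(\cdot)$-$k_0$ paraconvex on a convex set $A\subset X$ with constant $C\ge0$ (where $k_0\in K$) if for all $x_1,x_2\in A$ and all $\lambda\in[0,1]$, $$F(\lambda x_1+(1-\lambda)x_2)\le_K \lambda F(x_1)+(1-\lambda)F(x_2)+C\min\{\lambda,1-\lambda\}\,\alpha(\|x_1-x_2\|)\,k_0.$$ *)

theory Defs
  imports "HOL-Analysis.Analysis"
begin

definition pointed_cone :: "'a::real_vector set \<Rightarrow> bool" where
  "pointed_cone K \<longleftrightarrow> K \<inter> uminus ` K = {0}"

definition cone_le :: "'a::real_vector set \<Rightarrow> 'a \<Rightarrow> 'a \<Rightarrow> bool" where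
  "cone_le K x y \<longleftrightarrow> y - x \<in> K"

definition strongly_paraconvex ::
  "(real \<Rightarrow> real) \<Rightarrow> 'b::real_vector \<Rightarrow> 'b set \<Rightarrow> real \<Rightarrow> 'a::real_normed_vector set
     \<Rightarrow> ('a \<Rightarrow> 'b) \<Rightarrow> bool" where
  "strongly_paraconvex \<alpha> k0 K C A F \<longleftrightarrow>
     (\<forall>x1\<in>A. \<forall>x2\<in>A. \<forall>l\<in>{0..1::real}.
        cone_le K (F (l *\<^sub>R x1 + (1 - l) *\<^sub>R x2))
          (l *\<^sub>R F x1 + (1 - l) *\<^sub>R F x2
            + (C * min l (1 - l) * \<alpha> (norm (x1 - x2))) *\<^sub>R k0))"

definition phi_quot ::
  "('a::real_normed_vector \<Rightarrow> 'b::real_vector) \<Rightarrow> (real \<Rightarrow> real) \<Rightarrow> real \<Rightarrow> 'b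
     \<Rightarrow> 'a \<Rightarrow> 'a \<Rightarrow> real \<Rightarrow> real \<Rightarrow> 'b" where
  "phi_quot F \<alpha> C k0 x0 h t0 t =
     (1 / (t - t0)) *\<^sub>R (F (x0 + t *\<^sub>R h) - F (x0 + t0 *\<^sub>R h))
     + (C * (\<alpha> (t - t0) / (t - t0))) *\<^sub>R k0"

end

theory Submission
  imports Defs
begin

text \<open>With \<open>a = x0 + t0 h\<close>, \<open>b = x0 + t h\<close> and \<open>l = (t1 - t0) / (t - t0)\<close>, the point
  \<open>x0 + t1 h\<close> is \<open>l b + (1 - l) a\<close>. Paraconvexity and \<open>min l (1 - l) \<le> l\<close> bound the secant
  slope of \<open>F\<close> from \<open>a\<close> to \<open>x0 + t1 h\<close> by the slope from \<open>a\<close> to \<open>b\<close> plus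
  \<open>C \<alpha>(t - t0)/(t - t0) k0\<close>, i.e. by \<open>\<phi>(t)\<close>; and that first slope is \<open>\<phi>(t1)\<close> without its
  correction term.\<close>

lemma cone_le_trans:
  assumes "convex_cone K" "cone_le K x y" "cone_le K y z"
  shows "cone_le K x z"
proof -
  have "z - x = (z - y) + (y - x)" by simp
  then show ?thesis
    using assms convex_cone_add unfolding cone_le_def by metis
qed

lemma cone_le_scaleR:
  assumes "convex_cone K" "cone_le K x y" "c \<ge> 0"
  shows "cone_le K (c *\<^sub>R x) (c *\<^sub>R y)"
  using assms convex_cone_scaleR unfolding cone_le_def
  by (metis scaleR_diff_right)

lemma strongly_paraconvex_secant_slope:
  assumes K: "convex_cone K" and "k0 \<in> K" and "C \<ge> 0" and "\<alpha> (norm (b - a)) \<ge> 0"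
    and F: "strongly_paraconvex \<alpha> k0 K C A F"
    and "a \<in> A" "b \<in> A" and l: "0 < l" "l \<le> 1"
  shows "cone_le K ((1 / l) *\<^sub>R (F (l *\<^sub>R b + (1 - l) *\<^sub>R a) - F a))
           (F b - F a + (C * \<alpha> (norm (b - a))) *\<^sub>R k0)"
proof -
  define w where "w = F b - F a + (C * \<alpha> (norm (b - a))) *\<^sub>R k0"
  define m where "m = min l (1 - l)"
  have convex_comb: "cone_le K (F (l *\<^sub>R b + (1 - l) *\<^sub>R a))
      (l *\<^sub>R F b + (1 - l) *\<^sub>R F a + (C * m * \<alpha> (norm (b - a))) *\<^sub>R k0)"
    using F \<open>a \<in> A\<close> \<open>b \<in> A\<close> l unfolding strongly_paraconvex_def m_def by auto
  have "C * (l - m) * \<alpha> (norm (b - a)) \<ge> 0"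
    using assms by (simp add: m_def)
  then have "(C * (l - m) * \<alpha> (norm (b - a))) *\<^sub>R k0 \<in> K"
    using K \<open>k0 \<in> K\<close> convex_cone_scaleR by blast
  then have "cone_le K (l *\<^sub>R F b + (1 - l) *\<^sub>R F a + (C * m * \<alpha> (norm (b - a))) *\<^sub>R k0)
      (F a + l *\<^sub>R w)"
    unfolding cone_le_def w_def by (simp add: algebra_simps)
  with K convex_comb have "cone_le K (F (l *\<^sub>R b + (1 - l) *\<^sub>R a)) (F a + l *\<^sub>R w)"
    by (rule cone_le_trans)
  then have "cone_le K (F (l *\<^sub>R b + (1 - l) *\<^sub>R a) - F a) (l *\<^sub>R w)"
    by (simp add: cone_le_def algebra_simps)
  from cone_le_scaleR[OF K this, of "1 / l"] l show ?thesis
    by (simp add: w_def)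
qed

theorem proposition3p1:
  fixes F :: "'a::real_normed_vector \<Rightarrow> 'b::real_vector"
    and K :: "'b set" and \<alpha> :: "real \<Rightarrow> real" and A :: "'a set"
    and k0 :: 'b and C t0 :: real and x0 h :: 'a
  assumes "convex_cone K" and "pointed_cone K"
    and "\<forall>t\<ge>0. \<alpha> t \<ge> 0" and "mono_on {0..} \<alpha>"
    and "((\<lambda>t. \<alpha> t / t) \<longlongrightarrow> 0) (at_right 0)"
    and "convex A" and "k0 \<in> K" and "k0 \<noteq> 0" and "C \<ge> 0"
    and "strongly_paraconvex \<alpha> k0 K C A F"
    and "x0 \<in> A" and "norm h = 1"
  shows "\<forall>t1 t. t0 < t1 \<and> t1 < t \<and> x0 + t0 *\<^sub>R h \<in> A \<and> x0 + t *\<^sub>R h \<in> A \<longrightarrow>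
           phi_quot F \<alpha> C k0 x0 h t0 t - phi_quot F \<alpha> C k0 x0 h t0 t1
             + (C * (\<alpha> (t1 - t0) / (t1 - t0))) *\<^sub>R k0 \<in> K"
proof (intro allI impI, elim conjE)
  fix t1 t assume "t0 < t1" "t1 < t" and A: "x0 + t0 *\<^sub>R h \<in> A" "x0 + t *\<^sub>R h \<in> A"
  define l where "l = (t1 - t0) / (t - t0)"
  have l: "0 < l" "l \<le> 1" using \<open>t0 < t1\<close> \<open>t1 < t\<close> by (auto simp: l_def)
  have mid: "l *\<^sub>R (x0 + t *\<^sub>R h) + (1 - l) *\<^sub>R (x0 + t0 *\<^sub>R h) = x0 + t1 *\<^sub>R h"
  proof -
    have "t0 + l * (t - t0) = t1" using \<open>t0 < t1\<close> \<open>t1 < t\<close> by (simp add: l_def)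
    then show ?thesis by (simp add: algebra_simps flip: scaleR_add_left)
  qed
  have dist: "norm ((x0 + t *\<^sub>R h) - (x0 + t0 *\<^sub>R h)) = t - t0"
    using \<open>norm h = 1\<close> \<open>t0 < t1\<close> \<open>t1 < t\<close> by (simp flip: scaleR_diff_left)
  have "cone_le K ((1 / l) *\<^sub>R (F (x0 + t1 *\<^sub>R h) - F (x0 + t0 *\<^sub>R h)))
      (F (x0 + t *\<^sub>R h) - F (x0 + t0 *\<^sub>R h) + (C * \<alpha> (t - t0)) *\<^sub>R k0)"
    using strongly_paraconvex_secant_slope[OF assms(1,7,9) _ assms(10) A(1,2) l] assms(3)
      \<open>t0 < t1\<close> \<open>t1 < t\<close> unfolding mid dist by simp
  from cone_le_scaleR[OF assms(1) this, of "1 / (t - t0)"] \<open>t0 < t1\<close> \<open>t1 < t\<close>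
  show "phi_quot F \<alpha> C k0 x0 h t0 t - phi_quot F \<alpha> C k0 x0 h t0 t1
          + (C * (\<alpha> (t1 - t0) / (t1 - t0))) *\<^sub>R k0 \<in> K"
    by (simp add: cone_le_def phi_quot_def l_def algebra_simps)
qed

end
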